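(* Let $B$ be a minimum-weight basis of the weighted uncertainty matroid $\mathcal{M}=(E,\mathcal{I},A,w)$. A set $Q\subseteq E$ is a certificate of $B$ if and only if $Q$ is a vertex cover of the graph $G^B$ (i.e., every edge of $G^B$, including every loop $\{f,f\}$, has an endpoint in $Q$).
   Context: A weighted uncertainty matroid $\mathcal{M}=(E,\mathcal{I},A,w)$ consists of a matroid $M=(E,\mathcal{I})$ on a finite set $E$, for each $e\in E$ a non-empty finite union $A_e$ of bounded real intervals (each open or closed), and a weight $w_e\in A_e$. $L_e=\inf A_e$, $U_e=\sup A_e$. A minimum-weight basis is a basis minimizing total weight. A weight assignment is $w^*$ with $w^*_e\in A_e$, consistent with $Q$ if $w^*_e=w_e$ on $Q$. $Q$ is a certificate of $B$ if for every weight assignment consistent with $Q$, $B$ is a minimum-weight basis with respect to it. For $e\in E\setminus B$ let $C_e$ be the unique circuit in $B\cup\{e\}$, $F_e=\{f\in C_e\setminus\{e\}: U_f>L_e\}$, $\hat F_e=\{f\in C_e\setminus\{e\}: U_f>w_e\}$. The graph $G^B$ has vertex set $E$ and edge set $\bigcup_{e\in E\setminus B}E^B_e$ (edges may be loops $\{f,f\}$), where: (1) if $w_e\ge U_f$ for all $f\in C_e\setminus\{e\}$ and some $f'\in C_e\setminus\{e\}$ has $w_{f'}>L_e$, then $E^B_e=\{\{e,e\}\}$; (2) if $w_e\ge U_f$ for all $f\in C_e\setminus\{e\}$ and $w_f\le L_e$ for all $f\in C_e\setminus\{e\}$, then $E^B_e=\{\{e,f\}: f\in F_e\}$; (3) if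 some $f\in C_e\setminus\{e\}$ has $w_e<U_f$ and some $f'\in C_e\setminus\{e\}$ has $w_{f'}>L_e$, then $E^B_e=\{\{f,f\}: f\in\hat F_e\cup\{e\}\}$; (4) if some $f\in C_e\setminus\{e\}$ has $w_e<U_f$ and $w_{f'}\le L_e$ for all $f'\in C_e\setminus\{e\}$, then $E^B_e=\{\{e,f\}: f\in F_e\setminus\hat F_e\}\cup\{\{f,f\}: f\in\hat F_e\}$. *)

theory Defs
  imports Main "HOL-Library.Extended_Real"
begin

definition matroid :: "'a set \<Rightarrow> 'a set set \<Rightarrow> bool" where
  "matroid E \<I> \<longleftrightarrow> finite E \<and> (\<forall>X\<in>\<I>. X \<subseteq> E) \<and> {} \<in> \<I>
     \<and> (\<forall>X Y. X \<in> \<I> \<longrightarrow> Y \<subseteq> X \<longrightarrow> Y \<in> \<I>)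
     \<and> (\<forall>X Y. X \<in> \<I> \<longrightarrow> Y \<in> \<I> \<longrightarrow> card X < card Y \<longrightarrow> (\<exists>y\<in>Y - X. insert y X \<in> \<I>))"

definition basis :: "'a set \<Rightarrow> 'a set set \<Rightarrow> 'a set \<Rightarrow> bool" where
  "basis E \<I> B \<longleftrightarrow> B \<in> \<I> \<and> (\<forall>X\<in>\<I>. B \<subseteq> X \<longrightarrow> X = B)"

definition circuit :: "'a set \<Rightarrow> 'a set set \<Rightarrow> 'a set \<Rightarrow> bool" where
  "circuit E \<I> C \<longleftrightarrow> C \<subseteq> E \<and> C \<notin> \<I> \<and> (\<forall>D. D \<subset> C \<longrightarrow> D \<in> \<I>)"

text \<open>The unique circuit contained in B \<union> {e} (for a basis B and e \<notin> B).\<close>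
definition fund_circuit :: "'a set \<Rightarrow> 'a set set \<Rightarrow> 'a set \<Rightarrow> 'a \<Rightarrow> 'a set" where
  "fund_circuit E \<I> B e = (THE C. circuit E \<I> C \<and> C \<subseteq> insert e B)"

definition min_weight_basis :: "'a set \<Rightarrow> 'a set set \<Rightarrow> ('a \<Rightarrow> real) \<Rightarrow> 'a set \<Rightarrow> bool" where
  "min_weight_basis E \<I> x B \<longleftrightarrow> basis E \<I> B \<and> (\<forall>B'. basis E \<I> B' \<longrightarrow> sum x B \<le> sum x B')"

definition open_or_closed_interval :: "real set \<Rightarrow> bool" where
  "open_or_closed_interval S \<longleftrightarrow> (\<exists>a b. S = {a..b} \<or> S = {a<..<b})"

definition uncertainty_area :: "real set \<Rightarrow> bool" where
  "uncertainty_area S \<longleftrightarrow> S \<noteq> {} \<and>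
     (\<exists>\<F>. finite \<F> \<and> (\<forall>J\<in>\<F>. open_or_closed_interval J) \<and> S = \<Union>\<F>)"

definition L :: "('a \<Rightarrow> real set) \<Rightarrow> 'a \<Rightarrow> real" where
  "L A e = Inf (A e)"

definition U :: "('a \<Rightarrow> real set) \<Rightarrow> 'a \<Rightarrow> real" where
  "U A e = Sup (A e)"

definition weighted_uncertainty_matroid ::
  "'a set \<Rightarrow> 'a set set \<Rightarrow> ('a \<Rightarrow> real set) \<Rightarrow> ('a \<Rightarrow> real) \<Rightarrow> bool" where
  "weighted_uncertainty_matroid E \<I> A w \<longleftrightarrow> matroid E \<I> \<and>
     (\<forall>e\<in>E. uncertainty_area (A e)) \<and> (\<forall>e\<in>E. w e \<in> A e)"

definition weight_assignment :: "'a set \<Rightarrow> ('a \<Rightarrow> real set) \<Rightarrow> ('a \<Rightarrow> real) \<Rightarrow> bool" where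
  "weight_assignment E A w' \<longleftrightarrow> (\<forall>e\<in>E. w' e \<in> A e)"

definition certificate ::
  "'a set \<Rightarrow> 'a set set \<Rightarrow> ('a \<Rightarrow> real set) \<Rightarrow> ('a \<Rightarrow> real) \<Rightarrow> 'a set \<Rightarrow> 'a set \<Rightarrow> bool" where
  "certificate E \<I> A w B Q \<longleftrightarrow>
     (\<forall>w'. weight_assignment E A w' \<longrightarrow> (\<forall>e\<in>Q. w' e = w e) \<longrightarrow> min_weight_basis E \<I> w' B)"

section \<open>The graph G^B; edges are sets {e,f} (a loop {f,f} is the singleton {f})\<close>

definition F_set :: "'a set \<Rightarrow> 'a set set \<Rightarrow> ('a \<Rightarrow> real set) \<Rightarrow> 'a set \<Rightarrow> 'a \<Rightarrow> 'a set" where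
  "F_set E \<I> A B e = {f \<in> fund_circuit E \<I> B e - {e}. U A f > L A e}"

definition F_hat :: "'a set \<Rightarrow> 'a set set \<Rightarrow> ('a \<Rightarrow> real set) \<Rightarrow> ('a \<Rightarrow> real) \<Rightarrow> 'a set \<Rightarrow> 'a \<Rightarrow> 'a set" where
  "F_hat E \<I> A w B e = {f \<in> fund_circuit E \<I> B e - {e}. U A f > w e}"

definition edges_of :: "'a set \<Rightarrow> 'a set set \<Rightarrow> ('a \<Rightarrow> real set) \<Rightarrow> ('a \<Rightarrow> real) \<Rightarrow> 'a set \<Rightarrow> 'a \<Rightarrow> 'a set set" where
  "edges_of E \<I> A w B e =
    (let C' = fund_circuit E \<I> B e - {e} in
     if (\<forall>f\<in>C'. w e \<ge> U A f) then
       (if (\<exists>f'\<in>C'. w f' > L A e) then {{e, e}}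
        else {{e, f} | f. f \<in> F_set E \<I> A B e})
     else
       (if (\<exists>f'\<in>C'. w f' > L A e) then {{f, f} | f. f \<in> F_hat E \<I> A w B e \<union> {e}}
        else {{e, f} | f. f \<in> F_set E \<I> A B e - F_hat E \<I> A w B e}
             \<union> {{f, f} | f. f \<in> F_hat E \<I> A w B e}))"

definition graph_edges :: "'a set \<Rightarrow> 'a set set \<Rightarrow> ('a \<Rightarrow> real set) \<Rightarrow> ('a \<Rightarrow> real) \<Rightarrow> 'a set \<Rightarrow> 'a set set" where
  "graph_edges E \<I> A w B = (\<Union>e\<in>E - B. edges_of E \<I> A w B e)"

definition vertex_cover :: "'a set set \<Rightarrow> 'a set \<Rightarrow> bool" where
  "vertex_cover Edges Q \<longleftrightarrow> (\<forall>ed\<in>Edges. ed \<inter> Q \<noteq> {})"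

end

(*
  B is a minimum-weight basis for a weight function w' iff w' f \<le> w' e whenever e \<notin> B and
  f \<in> C_e - {e} (fundamental-circuit criterion, via basis exchange). Over the weight
  assignments that agree with w on Q, the values w' f and w' e vary independently; their
  supremum and infimum are w f resp. w e on Q and U f resp. L e outside Q. Hence Q is a
  certificate iff every such pair satisfies "sup w' f \<le> inf w' e". A case analysis of the four
  rules defining E^B_e shows that Q covers E^B_e exactly when these inequalities hold for e.
*)
theory Submission
  imports Defs
begin

lemma basis_indep: "basis E I B \<Longrightarrow> B \<in> I"
  unfolding basis_def by blast

context
  fixes E :: "'a set" and I :: "'a set set"
  assumes matroid: "matroid E I"
begin

lemma finite_ground: "finite E"
  using matroid unfolding matroid_def by blast

lemma indep_subset_ground: "X \<in> I \<Longrightarrow> X \<subseteq> E"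
  using matroid unfolding matroid_def by blast

lemma indep_finite: "X \<in> I \<Longrightarrow> finite X"
  using finite_ground indep_subset_ground by (rule finite_subset[rotated])

lemma indep_subset: "X \<in> I \<Longrightarrow> Y \<subseteq> X \<Longrightarrow> Y \<in> I"
  using matroid unfolding matroid_def by blast

lemma indep_augment: "X \<in> I \<Longrightarrow> Y \<in> I \<Longrightarrow> card X < card Y \<Longrightarrow> \<exists>y\<in>Y - X. insert y X \<in> I"
  using matroid unfolding matroid_def by blast

lemma indep_augment_to_card:
  assumes "X \<in> I" "Y \<in> I" "card X \<le> card Y"
  shows "\<exists>K\<in>I. X \<subseteq> K \<and> K \<subseteq> X \<union> Y \<and> card K = card Y"
  using assms
proof (induction "card Y - card X" arbitrary: X)
  case 0
  then show ?case by auto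
next
  case (Suc n)
  then have "card X < card Y"
    by simp
  then obtain y where y: "y \<in> Y - X" "insert y X \<in> I"
    using indep_augment[OF \<open>X \<in> I\<close> \<open>Y \<in> I\<close>] by blast
  have "card (insert y X) = Suc (card X)"
    using y indep_finite[OF \<open>X \<in> I\<close>] by simp
  then have "n = card Y - card (insert y X)" "card (insert y X) \<le> card Y"
    using Suc.hyps(2) \<open>card X < card Y\<close> by simp_all
  then obtain K where K: "K \<in> I" "insert y X \<subseteq> K" "K \<subseteq> insert y X \<union> Y" "card K = card Y"
    using Suc.hyps(1)[OF _ y(2) \<open>Y \<in> I\<close>] by blast
  have "X \<subseteq> K" "K \<subseteq> X \<union> Y"
    using K(2,3) y(1) by auto
  then show ?case
    using K(1,4) by blast
qed

lemma basis_card_max: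
  assumes "basis E I B" "X \<in> I"
  shows "card X \<le> card B"
proof (rule ccontr)
  assume "\<not> card X \<le> card B"
  then obtain y where "y \<in> X - B" "insert y B \<in> I"
    using indep_augment[OF basis_indep[OF \<open>basis E I B\<close>] \<open>X \<in> I\<close>] by auto
  then show False
    using \<open>basis E I B\<close> unfolding basis_def by blast
qed

lemma basis_if_card_eq:
  assumes "basis E I B" "X \<in> I" "card X = card B"
  shows "basis E I X"
  unfolding basis_def
proof (intro conjI ballI impI \<open>X \<in> I\<close>)
  fix Y
  assume "Y \<in> I" "X \<subseteq> Y"
  have "card Y \<le> card X"
    using basis_card_max[OF \<open>basis E I B\<close> \<open>Y \<in> I\<close>] \<open>card X = card B\<close> by simp
  moreover have "finite Y"
    using \<open>Y \<in> I\<close> by (rule indep_finite)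
  moreover have "card X \<le> card Y"
    using \<open>finite Y\<close> \<open>X \<subseteq> Y\<close> by (rule card_mono)
  ultimately have "card X = card Y"
    by linarith
  then show "Y = X"
    using card_subset_eq[OF \<open>finite Y\<close> \<open>X \<subseteq> Y\<close>] by metis
qed

lemma dependent_contains_circuit:
  assumes "X \<subseteq> E" "X \<notin> I"
  shows "\<exists>C\<subseteq>X. circuit E I C"
proof -
  obtain C where C: "C \<subseteq> X \<and> C \<notin> I" and min: "\<forall>D. D \<subseteq> X \<and> D \<notin> I \<longrightarrow> card C \<le> card D"
    using ex_has_least_nat[of "\<lambda>C. C \<subseteq> X \<and> C \<notin> I" X card] assms(2) by blast
  have "C \<subseteq> E"
    using C assms(1) by blast
  then have "finite C"
    using finite_ground by (rule finite_subset)
  have "D \<in> I" if "D \<subset> C" for D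
  proof (rule ccontr)
    assume "D \<notin> I"
    then have "card C \<le> card D"
      using min that C by blast
    then show False
      using psubset_card_mono[OF \<open>finite C\<close> that] by simp
  qed
  then have "circuit E I C"
    using C assms(1) unfolding circuit_def by blast
  then show ?thesis
    using C by blast
qed

text \<open>Two distinct circuits C1, C2 in J + e both contain e. Augmenting C1 - {g}, for some
  g \<in> C1 - C2, within the independent set C1 \<union> C2 - {e} yields the independent set
  C1 \<union> C2 - {g}, which contains C2.\<close>
lemma circuit_unique:
  assumes J: "J \<in> I" and c1: "circuit E I C1" and c2: "circuit E I C2"
    and s1: "C1 \<subseteq> insert e J" and s2: "C2 \<subseteq> insert e J"
  shows "C1 = C2"
proof (rule ccontr)
  assume "C1 \<noteq> C2"
  have d1: "C1 \<notin> I" and d2: "C2 \<notin> I"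
    using c1 c2 unfolding circuit_def by blast+
  have "e \<in> C1" "e \<in> C2"
    using s1 s2 d1 d2 indep_subset[OF J] by blast+
  have "\<not> C1 \<subseteq> C2" "\<not> C2 \<subseteq> C1"
    using \<open>C1 \<noteq> C2\<close> c1 c2 d1 d2 unfolding circuit_def by blast+
  then obtain g where g: "g \<in> C1" "g \<notin> C2"
    by blast
  define S where "S = C1 \<union> C2"
  have "S \<subseteq> E"
    using c1 c2 unfolding S_def circuit_def by blast
  then have "finite S"
    using finite_ground by (rule finite_subset)
  have i1: "C1 - {g} \<in> I"
    using c1 g unfolding circuit_def by blast
  have i2: "S - {e} \<in> I"
    using indep_subset[OF J, of "S - {e}"] s1 s2 unfolding S_def by blast
  have "C1 \<subset> S"
    using \<open>\<not> C2 \<subseteq> C1\<close> unfolding S_def by blast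
  then have "card (C1 - {g}) \<le> card (S - {e})"
    using psubset_card_mono[OF \<open>finite S\<close> \<open>C1 \<subset> S\<close>] g \<open>e \<in> C1\<close> unfolding S_def by simp
  then obtain K where K: "K \<in> I" "C1 - {g} \<subseteq> K" "K \<subseteq> (C1 - {g}) \<union> (S - {e})"
    "card K = card (S - {e})"
    using indep_augment_to_card[OF i1 i2] by blast
  have "g \<notin> K"
    using K(1,2) d1 indep_subset[OF K(1), of C1] by blast
  then have "K \<subseteq> S - {g}"
    using K(3) unfolding S_def by blast
  moreover have "card K = card (S - {g})"
    using K(4) g \<open>e \<in> C1\<close> unfolding S_def by simp
  ultimately have "K = S - {g}"
    using \<open>finite S\<close> by (metis card_subset_eq finite_Diff)
  then show False
    using g d2 indep_subset[OF K(1), of C2] unfolding S_def by blast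
qed

lemma basis_swap:
  assumes "basis E I B" "x \<in> B" "y \<notin> B" "insert y (B - {x}) \<in> I"
  shows "basis E I (insert y (B - {x}))"
proof -
  have "finite B"
    using assms(1) basis_indep indep_finite by blast
  have "card (insert y (B - {x})) = Suc (card (B - {x}))"
    using assms(3) \<open>finite B\<close> by simp
  also have "\<dots> = card B"
    using card_Suc_Diff1[OF \<open>finite B\<close> assms(2)] .
  finally show ?thesis
    by (rule basis_if_card_eq[OF assms(1,4)])
qed

lemma fund_circuit:
  assumes "basis E I B" "e \<in> E" "e \<notin> B"
  shows fund_circuit_circuit: "circuit E I (fund_circuit E I B e)"
    and fund_circuit_subset: "fund_circuit E I B e \<subseteq> insert e B"
proof -
  have BI: "B \<in> I"
    using assms(1) by (rule basis_indep)
  have "insert e B \<notin> I"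
    using assms unfolding basis_def by blast
  moreover have "insert e B \<subseteq> E"
    using indep_subset_ground[OF BI] \<open>e \<in> E\<close> by blast
  ultimately obtain C where C: "C \<subseteq> insert e B" "circuit E I C"
    using dependent_contains_circuit by blast
  have "fund_circuit E I B e = C"
    unfolding fund_circuit_def
  proof (rule the_equality)
    show "circuit E I C \<and> C \<subseteq> insert e B"
      using C by blast
    show "C' = C" if "circuit E I C' \<and> C' \<subseteq> insert e B" for C'
      using that circuit_unique[OF BI _ C(2) _ C(1)] by blast
  qed
  then show "circuit E I (fund_circuit E I B e)" "fund_circuit E I B e \<subseteq> insert e B"
    using C by simp_all
qed

lemma basis_swap_fund_circuit:
  assumes b: "basis E I B" and e: "e \<in> E" "e \<notin> B" and f: "f \<in> fund_circuit E I B e - {e}"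
  shows "basis E I (insert e (B - {f}))"
proof -
  have BI: "B \<in> I"
    using b by (rule basis_indep)
  have "f \<in> B"
    using f fund_circuit_subset[OF b e] by blast
  have "insert e (B - {f}) \<in> I"
  proof (rule ccontr)
    assume "insert e (B - {f}) \<notin> I"
    moreover have "insert e (B - {f}) \<subseteq> E"
      using indep_subset_ground[OF BI] e by blast
    ultimately obtain C where C: "C \<subseteq> insert e (B - {f})" "circuit E I C"
      using dependent_contains_circuit by blast
    then have "C = fund_circuit E I B e"
      using circuit_unique[OF BI _ fund_circuit_circuit[OF b e] _ fund_circuit_subset[OF b e]] by blast
    then show False
      using C f by blast
  qed
  then show ?thesis
    by (rule basis_swap[OF b \<open>f \<in> B\<close> e(2)])
qed

lemma fund_circuit_diff_subset:
  assumes "basis E I B" "e \<in> E" "e \<notin> B"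
  shows "fund_circuit E I B e - {e} \<subseteq> B"
  using fund_circuit_subset[OF assms] by blast

lemma fund_circuit_diff_subset_ground:
  assumes "basis E I B" "e \<in> E" "e \<notin> B"
  shows "fund_circuit E I B e - {e} \<subseteq> E"
  using fund_circuit_diff_subset[OF assms] indep_subset_ground[OF basis_indep[OF assms(1)]]
  by (rule subset_trans)

lemma basis_exchange_fund_circuit:
  assumes b: "basis E I B" and b': "basis E I B'" and e: "e \<in> B'" "e \<notin> B"
  shows "\<exists>f\<in>fund_circuit E I B e - {e}. f \<notin> B' \<and> insert f (B' - {e}) \<in> I"
proof (rule ccontr)
  define X where "X = B' - {e}"
  define D where "D = fund_circuit E I B e - {e}"
  assume "\<not> ?thesis"
  then have no_ext: "insert f X \<notin> I" if "f \<in> D - X" for f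
    using that unfolding D_def X_def by blast
  have B'I: "B' \<in> I"
    using b' by (rule basis_indep)
  have "e \<in> E"
    using indep_subset_ground[OF B'I] e by blast
  have XI: "X \<in> I"
    using indep_subset[OF B'I, of X] unfolding X_def by blast
  have "D \<subseteq> B"
    using fund_circuit_subset[OF b \<open>e \<in> E\<close> e(2)] unfolding D_def by blast
  then have DI: "D \<in> I"
    by (rule indep_subset[OF basis_indep[OF b]])
  have "card D \<le> card X"
    using indep_augment[OF XI DI] no_ext by force
  then obtain K where K: "K \<in> I" "D \<subseteq> K" "K \<subseteq> D \<union> X" "card K = card X"
    using indep_augment_to_card[OF DI XI] by blast
  moreover have "card X < card B'"
    using card_Diff1_less[OF indep_finite[OF B'I] e(1)] unfolding X_def .
  ultimately obtain y where y: "y \<in> B' - K" "insert y K \<in> I"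
    using indep_augment[OF K(1) B'I] by auto
  have "y \<noteq> e"
  proof
    assume "y = e"
    then have "fund_circuit E I B e \<subseteq> insert y K"
      using K(2) unfolding D_def by blast
    then show False
      using indep_subset[OF y(2)] fund_circuit_circuit[OF b \<open>e \<in> E\<close> e(2)] unfolding circuit_def by blast
  qed
  then have "card X < card (insert y K)"
    using y K(4) indep_finite[OF K(1)] by simp
  then obtain z where "z \<in> insert y K - X" "insert z X \<in> I"
    using indep_augment[OF XI y(2)] by blast
  moreover have "z \<in> D - X"
    using calculation(1) \<open>y \<noteq> e\<close> y K(3) unfolding X_def by blast
  ultimately show False
    using no_ext by blast
qed

lemma min_weight_basis_fund_circuit_le:
  assumes opt: "min_weight_basis E I x B" and e: "e \<in> E" "e \<notin> B"
    and f: "f \<in> fund_circuit E I B e - {e}"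
  shows "x f \<le> x e"
proof -
  have b: "basis E I B"
    using opt unfolding min_weight_basis_def by blast
  have "finite B" "f \<in> B"
    using indep_finite[OF basis_indep[OF b]] f fund_circuit_subset[OF b e] by blast+
  have "sum x B \<le> sum x (insert e (B - {f}))"
    using opt basis_swap_fund_circuit[OF b e f] unfolding min_weight_basis_def by blast
  also have "\<dots> = x e + sum x B - x f"
    using e \<open>finite B\<close> \<open>f \<in> B\<close> by (simp add: sum_diff1)
  finally show ?thesis
    by simp
qed

text \<open>Induction on the distance card (B' - B) to a competing basis B': the exchange lemma
  trades some e \<in> B' - B for an f \<in> C_e, which does not increase the weight.\<close>
lemma min_weight_basis_if_fund_circuit_le:
  assumes b: "basis E I B"
    and le: "\<And>e f. e \<in> E - B \<Longrightarrow> f \<in> fund_circuit E I B e - {e} \<Longrightarrow> x f \<le> x e"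
  shows "min_weight_basis E I x B"
proof -
  have "sum x B \<le> sum x B'" if "basis E I B'" "card (B' - B) = n" for n B'
    using that
  proof (induction n arbitrary: B')
    case 0
    then have "B' \<subseteq> B"
      using indep_finite[OF basis_indep] by auto
    then show ?case
      using 0 b unfolding basis_def by blast
  next
    case (Suc n)
    have B'I: "B' \<in> I" and "finite B'"
      using Suc.prems(1) indep_finite basis_indep by blast+
    obtain e where e: "e \<in> B'" "e \<notin> B"
      using Suc.prems(2) by (metis Diff_iff card.empty ex_in_conv nat.distinct(1))
    have "e \<in> E"
      using indep_subset_ground[OF B'I] e(1) by blast
    obtain f where f: "f \<in> fund_circuit E I B e - {e}" "f \<notin> B'" "insert f (B' - {e}) \<in> I"
      using basis_exchange_fund_circuit[OF b Suc.prems(1) e] by blast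
    have "f \<in> B"
      using f(1) fund_circuit_subset[OF b \<open>e \<in> E\<close> e(2)] by blast
    have "basis E I (insert f (B' - {e}))"
      using basis_swap[OF Suc.prems(1) e(1) f(2,3)] .
    moreover have "insert f (B' - {e}) - B = (B' - B) - {e}"
      using \<open>f \<in> B\<close> by blast
    then have "card (insert f (B' - {e}) - B) = n"
      using Suc.prems(2) e by simp
    ultimately have "sum x B \<le> sum x (insert f (B' - {e}))"
      using Suc.IH by blast
    also have "\<dots> = x f + sum x B' - x e"
      using f(2) e(1) \<open>finite B'\<close> by (simp add: sum_diff1)
    also have "\<dots> \<le> sum x B'"
      using le[of e f] \<open>e \<in> E\<close> e(2) f(1) by simp
    finally show ?case .
  qed
  then show ?thesis
    using b unfolding min_weight_basis_def by blast
qed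

end

lemma uncertainty_area_bounded:
  assumes "uncertainty_area S"
  shows "bdd_above S" "bdd_below S"
proof -
  obtain \<F> where \<F>: "finite \<F>" "\<forall>J\<in>\<F>. open_or_closed_interval J" "S = \<Union>\<F>"
    using assms unfolding uncertainty_area_def by blast
  have "bdd_above J \<and> bdd_below J" if "J \<in> \<F>" for J
    using \<F>(2) that unfolding open_or_closed_interval_def by auto
  then show "bdd_above S" "bdd_below S"
    using \<F>(3) bdd_above_UN[OF \<F>(1), of id] bdd_below_UN[OF \<F>(1), of id] by auto
qed

lemma L_le:
  assumes "uncertainty_area (A x)" "a \<in> A x"
  shows "L A x \<le> a"
  unfolding L_def using cInf_lower[OF assms(2) uncertainty_area_bounded(2)[OF assms(1)]] .

lemma le_U:
  assumes "uncertainty_area (A x)" "a \<in> A x"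
  shows "a \<le> U A x"
  unfolding U_def using cSup_upper[OF assms(2) uncertainty_area_bounded(1)[OF assms(1)]] .

text \<open>The supremum and infimum of w' x over all weight assignments w' consistent with Q.\<close>
definition U_given :: "('a \<Rightarrow> real set) \<Rightarrow> ('a \<Rightarrow> real) \<Rightarrow> 'a set \<Rightarrow> 'a \<Rightarrow> real" where
  "U_given A w Q x = (if x \<in> Q then w x else U A x)"

definition L_given :: "('a \<Rightarrow> real set) \<Rightarrow> ('a \<Rightarrow> real) \<Rightarrow> 'a set \<Rightarrow> 'a \<Rightarrow> real" where
  "L_given A w Q x = (if x \<in> Q then w x else L A x)"

lemma consistent_le_U_given:
  assumes "uncertainty_area (A x)" "a \<in> A x" "x \<in> Q \<Longrightarrow> a = w x"
  shows "a \<le> U_given A w Q x"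
  unfolding U_given_def using assms le_U by auto

lemma L_given_le_consistent:
  assumes "uncertainty_area (A x)" "a \<in> A x" "x \<in> Q \<Longrightarrow> a = w x"
  shows "L_given A w Q x \<le> a"
  unfolding L_given_def using assms L_le by auto

lemma less_U_given_obtain:
  assumes "uncertainty_area (A x)" "w x \<in> A x" "c < U_given A w Q x"
  obtains a where "a \<in> A x" "c < a" "x \<in> Q \<Longrightarrow> a = w x"
proof (cases "x \<in> Q")
  case False
  then have "c < Sup (A x)"
    using assms(3) unfolding U_given_def U_def by simp
  then show ?thesis
    using that False less_cSup_iff[of "A x" c] assms(2) uncertainty_area_bounded[OF assms(1)] by blast
qed (use assms that in \<open>auto simp: U_given_def\<close>)

lemma L_given_less_obtain:
  assumes "uncertainty_area (A x)" "w x \<in> A x" "L_given A w Q x < c"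
  obtains a where "a \<in> A x" "a < c" "x \<in> Q \<Longrightarrow> a = w x"
proof (cases "x \<in> Q")
  case False
  then have "Inf (A x) < c"
    using assms(3) unfolding L_given_def L_def by simp
  then show ?thesis
    using that False cInf_less_iff[of "A x" c] assms(2) uncertainty_area_bounded[OF assms(1)] by blast
qed (use assms that in \<open>auto simp: L_given_def\<close>)

lemma weighted_uncertainty_matroidD:
  assumes "weighted_uncertainty_matroid E I A w"
  shows "matroid E I" "x \<in> E \<Longrightarrow> uncertainty_area (A x)" "x \<in> E \<Longrightarrow> w x \<in> A x"
  using assms unfolding weighted_uncertainty_matroid_def by blast+

text \<open>If U_given f > L_given e, some consistent assignment pushes w' f above and w' e below a
  common threshold, and then swapping f for e beats B.\<close>
lemma certificate_U_given_le_L_given: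
  assumes wum: "weighted_uncertainty_matroid E I A w" and b: "basis E I B"
    and cert: "certificate E I A w B Q"
    and e: "e \<in> E - B" and f: "f \<in> fund_circuit E I B e - {e}"
  shows "U_given A w Q f \<le> L_given A w Q e"
proof (rule ccontr)
  note m = weighted_uncertainty_matroidD(1)[OF wum]
  have "e \<in> E" "f \<in> E" "f \<noteq> e"
    using e f fund_circuit_diff_subset_ground[OF m b] by blast+
  note area = weighted_uncertainty_matroidD(2)[OF wum] and w = weighted_uncertainty_matroidD(3)[OF wum]
  assume "\<not> ?thesis"
  then have "L_given A w Q e < U_given A w Q f"
    by simp
  then obtain c where c: "L_given A w Q e < c" "c < U_given A w Q f"
    using dense by blast
  obtain a where a: "a \<in> A f" "c < a" "f \<in> Q \<Longrightarrow> a = w f"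
    using less_U_given_obtain[where A=A and x=f, OF area w c(2)] \<open>f \<in> E\<close> by blast
  obtain b where b: "b \<in> A e" "b < c" "e \<in> Q \<Longrightarrow> b = w e"
    using L_given_less_obtain[where A=A and x=e, OF area w c(1)] \<open>e \<in> E\<close> by blast
  define w' where "w' = w(f := a, e := b)"
  have "weight_assignment E A w'" "\<forall>x\<in>Q. w' x = w x"
    using w a b \<open>f \<noteq> e\<close> unfolding weight_assignment_def w'_def by auto
  then have "min_weight_basis E I w' B"
    using cert unfolding certificate_def by blast
  then have "w' f \<le> w' e"
    using min_weight_basis_fund_circuit_le[OF m _ \<open>e \<in> E\<close> _ f] e by blast
  then show False
    using \<open>f \<noteq> e\<close> a b unfolding w'_def by simp
qed

lemma certificate_if_U_given_le_L_given:
  assumes wum: "weighted_uncertainty_matroid E I A w" and b: "basis E I B"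
    and le: "\<And>e f. e \<in> E - B \<Longrightarrow> f \<in> fund_circuit E I B e - {e} \<Longrightarrow>
      U_given A w Q f \<le> L_given A w Q e"
  shows "certificate E I A w B Q"
  unfolding certificate_def
proof (intro allI impI min_weight_basis_if_fund_circuit_le[OF weighted_uncertainty_matroidD(1)[OF wum] b])
  fix w' e f
  assume w': "weight_assignment E A w'" "\<forall>x\<in>Q. w' x = w x"
    and e: "e \<in> E - B" and f: "f \<in> fund_circuit E I B e - {e}"
  have "e \<in> E" "f \<in> E"
    using e f fund_circuit_diff_subset_ground[OF weighted_uncertainty_matroidD(1)[OF wum] b] by blast+
  then have area: "uncertainty_area (A e)" "uncertainty_area (A f)"
    and "w' e \<in> A e" "w' f \<in> A f"
    using w' weighted_uncertainty_matroidD(2)[OF wum] unfolding weight_assignment_def by blast+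
  have "w' f \<le> U_given A w Q f"
    using consistent_le_U_given[where A=A and x=f, OF area(2) \<open>w' f \<in> A f\<close>] w'(2) by blast
  also have "\<dots> \<le> L_given A w Q e"
    using le e f by blast
  also have "\<dots> \<le> w' e"
    using L_given_le_consistent[where A=A and x=e, OF area(1) \<open>w' e \<in> A e\<close>] w'(2) by blast
  finally show "w' f \<le> w' e" .
qed

lemma certificate_iff_U_given_le_L_given:
  assumes "weighted_uncertainty_matroid E I A w" "basis E I B"
  shows "certificate E I A w B Q \<longleftrightarrow>
    (\<forall>e\<in>E - B. \<forall>f\<in>fund_circuit E I B e - {e}. U_given A w Q f \<le> L_given A w Q e)"
  using certificate_U_given_le_L_given[OF assms] certificate_if_U_given_le_L_given[OF assms]
  by blast

lemma U_given_le_L_given_iff: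
  assumes "w f \<le> w e" "w f \<le> U A f" "L A e \<le> w e"
  shows "U_given A w Q f \<le> L_given A w Q e \<longleftrightarrow>
    (f \<notin> Q \<longrightarrow> U A f \<le> L_given A w Q e) \<and> (e \<notin> Q \<longrightarrow> w f \<le> L A e)"
  using assms unfolding U_given_def L_given_def by auto

lemma all_U_given_le_L_given_iff:
  assumes "\<forall>f\<in>C. w f \<le> w e" "\<forall>f\<in>C. w f \<le> U A f" "L A e \<le> w e"
  shows "(\<forall>f\<in>C. U_given A w Q f \<le> L_given A w Q e) \<longleftrightarrow>
    (if \<exists>f\<in>C. L A e < w f then e \<in> Q \<and> (\<forall>f\<in>C. w e < U A f \<longrightarrow> f \<in> Q)
     else \<forall>f\<in>C. f \<notin> Q \<longrightarrow> U A f \<le> L_given A w Q e)"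
proof -
  have iff: "U_given A w Q f \<le> L_given A w Q e \<longleftrightarrow>
      (f \<notin> Q \<longrightarrow> U A f \<le> L_given A w Q e) \<and> (e \<notin> Q \<longrightarrow> w f \<le> L A e)" if "f \<in> C" for f
    by (rule U_given_le_L_given_iff) (use assms that in blast)+
  have L_given_e: "L_given A w Q e = (if e \<in> Q then w e else L A e)"
    unfolding L_given_def ..
  show ?thesis
  proof (cases "\<exists>f\<in>C. L A e < w f")
    case True
    then obtain f' where "f' \<in> C" "L A e < w f'"
      by blast
    show ?thesis
    proof (simp only: True if_True, intro iffI)
      assume all: "\<forall>f\<in>C. U_given A w Q f \<le> L_given A w Q e"
      then have "e \<in> Q"
        using iff[OF \<open>f' \<in> C\<close>] \<open>f' \<in> C\<close> \<open>L A e < w f'\<close> by auto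
      moreover have "f \<in> Q" if "f \<in> C" "w e < U A f" for f
        using all iff[OF that(1)] that \<open>e \<in> Q\<close> L_given_e by auto
      ultimately show "e \<in> Q \<and> (\<forall>f\<in>C. w e < U A f \<longrightarrow> f \<in> Q)"
        by blast
    next
      assume "e \<in> Q \<and> (\<forall>f\<in>C. w e < U A f \<longrightarrow> f \<in> Q)"
      then show "\<forall>f\<in>C. U_given A w Q f \<le> L_given A w Q e"
        using iff L_given_e by (auto simp: not_less)
    qed
  next
    case False
    then show ?thesis
      using iff by auto
  qed
qed

lemma vertex_cover_Un: "vertex_cover (X \<union> Y) Q \<longleftrightarrow> vertex_cover X Q \<and> vertex_cover Y Q"
  unfolding vertex_cover_def by blast

lemma vertex_cover_pairs: "vertex_cover {{e, f} | f. f \<in> S} Q \<longleftrightarrow> (\<forall>f\<in>S. e \<in> Q \<or> f \<in> Q)"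
  unfolding vertex_cover_def Setcompr_eq_image by auto

lemma vertex_cover_loops: "vertex_cover {{f, f} | f. f \<in> S} Q \<longleftrightarrow> S \<subseteq> Q"
  unfolding vertex_cover_def Setcompr_eq_image by auto

lemma edges_of_eq:
  assumes "C = fund_circuit E I B e - {e}"
  shows "edges_of E I A w B e =
    (if \<forall>f\<in>C. U A f \<le> w e then
       (if \<exists>f\<in>C. L A e < w f then {{e, e}} else {{e, f} | f. f \<in> {f \<in> C. L A e < U A f}})
     else
       (if \<exists>f\<in>C. L A e < w f then {{f, f} | f. f \<in> {f \<in> C. w e < U A f} \<union> {e}}
        else {{e, f} | f. f \<in> {f \<in> C. L A e < U A f \<and> U A f \<le> w e}}
             \<union> {{f, f} | f. f \<in> {f \<in> C. w e < U A f}}))"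
  unfolding edges_of_def Let_def F_set_def F_hat_def assms[symmetric] by auto

lemma vertex_cover_edges_of_iff:
  assumes C: "C = fund_circuit E I B e - {e}" and L_le: "L A e \<le> w e"
  shows "vertex_cover (edges_of E I A w B e) Q \<longleftrightarrow>
    (if \<exists>f\<in>C. L A e < w f then e \<in> Q \<and> (\<forall>f\<in>C. w e < U A f \<longrightarrow> f \<in> Q)
     else \<forall>f\<in>C. f \<notin> Q \<longrightarrow> U A f \<le> L_given A w Q e)"
proof (cases "\<forall>f\<in>C. U A f \<le> w e"; cases "\<exists>f\<in>C. L A e < w f")
  assume "\<forall>f\<in>C. U A f \<le> w e" "\<exists>f\<in>C. L A e < w f"
  then show ?thesis
    unfolding edges_of_eq[OF C] by (auto simp: vertex_cover_def not_less)
next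
  assume "\<forall>f\<in>C. U A f \<le> w e" "\<not> (\<exists>f\<in>C. L A e < w f)"
  then show ?thesis
    unfolding edges_of_eq[OF C] if_P[OF \<open>\<forall>f\<in>C. U A f \<le> w e\<close>]
      if_not_P[OF \<open>\<not> (\<exists>f\<in>C. L A e < w f)\<close>] vertex_cover_pairs
    by (auto simp: L_given_def not_less)
next
  assume "\<not> (\<forall>f\<in>C. U A f \<le> w e)" "\<exists>f\<in>C. L A e < w f"
  then show ?thesis
    unfolding edges_of_eq[OF C] if_not_P[OF \<open>\<not> (\<forall>f\<in>C. U A f \<le> w e)\<close>]
      if_P[OF \<open>\<exists>f\<in>C. L A e < w f\<close>] vertex_cover_loops
    by auto
next
  assume "\<not> (\<forall>f\<in>C. U A f \<le> w e)" "\<not> (\<exists>f\<in>C. L A e < w f)"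
  then show ?thesis
    unfolding edges_of_eq[OF C] if_not_P[OF \<open>\<not> (\<forall>f\<in>C. U A f \<le> w e)\<close>]
      if_not_P[OF \<open>\<not> (\<exists>f\<in>C. L A e < w f)\<close>] vertex_cover_Un vertex_cover_pairs vertex_cover_loops
    using L_le by (auto simp: L_given_def not_less subset_iff) (meson not_le)
qed

lemma vertex_cover_edges_of_iff_U_given_le_L_given:
  assumes wum: "weighted_uncertainty_matroid E I A w" and opt: "min_weight_basis E I w B"
    and e: "e \<in> E - B"
  shows "vertex_cover (edges_of E I A w B e) Q \<longleftrightarrow>
    (\<forall>f\<in>fund_circuit E I B e - {e}. U_given A w Q f \<le> L_given A w Q e)"
proof -
  define C where "C = fund_circuit E I B e - {e}"
  note m = weighted_uncertainty_matroidD(1)[OF wum]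
    and area = weighted_uncertainty_matroidD(2)[OF wum] and w = weighted_uncertainty_matroidD(3)[OF wum]
  have b: "basis E I B"
    using opt unfolding min_weight_basis_def by blast
  have "e \<in> E" "e \<notin> B" "C \<subseteq> E"
    using e fund_circuit_diff_subset_ground[OF m b] unfolding C_def by blast+
  have le_e: "\<forall>f\<in>C. w f \<le> w e"
    using min_weight_basis_fund_circuit_le[OF m opt \<open>e \<in> E\<close> \<open>e \<notin> B\<close>] unfolding C_def by blast
  have le_U: "\<forall>f\<in>C. w f \<le> U A f"
    using le_U[where A=A] area w \<open>C \<subseteq> E\<close> by blast
  have L_le: "L A e \<le> w e"
    using L_le[where A=A and x=e] area w \<open>e \<in> E\<close> by blast
  have "vertex_cover (edges_of E I A w B e) Q \<longleftrightarrow>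
      (if \<exists>f\<in>C. L A e < w f then e \<in> Q \<and> (\<forall>f\<in>C. w e < U A f \<longrightarrow> f \<in> Q)
       else \<forall>f\<in>C. f \<notin> Q \<longrightarrow> U A f \<le> L_given A w Q e)"
    by (rule vertex_cover_edges_of_iff[where w=w, OF C_def L_le])
  also have "\<dots> \<longleftrightarrow> (\<forall>f\<in>C. U_given A w Q f \<le> L_given A w Q e)"
    by (rule all_U_given_le_L_given_iff[where w=w and e=e and A=A, OF le_e le_U L_le, symmetric])
  finally show ?thesis
    unfolding C_def .
qed

theorem corollary27:
  fixes E :: "'a set" and \<I> :: "'a set set" and A :: "'a \<Rightarrow> real set"
    and w :: "'a \<Rightarrow> real" and B Q :: "'a set"
  assumes "weighted_uncertainty_matroid E \<I> A w"
    and "min_weight_basis E \<I> w B"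
    and "Q \<subseteq> E"
  shows "certificate E \<I> A w B Q \<longleftrightarrow> vertex_cover (graph_edges E \<I> A w B) Q"
proof -
  have "vertex_cover (graph_edges E \<I> A w B) Q \<longleftrightarrow>
      (\<forall>e\<in>E - B. vertex_cover (edges_of E \<I> A w B e) Q)"
    unfolding vertex_cover_def graph_edges_def by blast
  also have "\<dots> \<longleftrightarrow>
      (\<forall>e\<in>E - B. \<forall>f\<in>fund_circuit E \<I> B e - {e}. U_given A w Q f \<le> L_given A w Q e)"
    using vertex_cover_edges_of_iff_U_given_le_L_given[OF assms(1,2)] by blast
  also have "\<dots> \<longleftrightarrow> certificate E \<I> A w B Q"
    using certificate_iff_U_given_le_L_given[OF assms(1)] assms(2)
    unfolding min_weight_basis_def by blast
  finally show ?thesis ..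
qed

end
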